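(* Let $G=(V,E)$ be a finite graph with boundary $B\subseteq V$, $|B|\ge2$, with maximum degree $\Delta\ge3$, and let $t\ge1$ be an integer such that the boundary diameter satisfies $D_B\ge 2t+2$ (in particular $D_B\ge4$). Let $q=\Delta-1$. Then $$\sigma_2(G,B)\le\frac{(q+1)(q^{t+1}-q^t+1)}{q^{t+1}}=q-\frac{q^t-q-1}{q^{t+1}}.$$ Moreover, the right-hand side is monotone decreasing in $t$.
   Context: A boundary is $B\subseteq V$ with $|B|\ge2$. The boundary diameter $D_B$ is $\max_{x,y\in B}\operatorname{dist}_G(x,y)$, with $\operatorname{dist}_G$ the graph distance in $G$. Rayleigh quotient: $R(f)=\frac{\sum_{\{x,y\}\in E}(f(x)-f(y))^2}{\sum_{x\in B}f(x)^2}$ ($+\infty$ if $f|_B=0$); $\sigma_2(G,B)=\min_{W\subseteq\mathbb{R}^V,\dim W=2}\max_{0\ne f\in W}R(f)$. *)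

theory Defs
  imports "HOL-Analysis.Analysis" "HOL-Library.Extended_Nat"
begin

text \<open>A finite simple graph: vertex set = the finite type 'n (V = UNIV),
  edges given by a symmetric irreflexive adjacency relation adj.
  Functions f : V \<rightarrow> R are vectors of type real ^ 'n.\<close>

definition simple_graph :: "('n::finite \<Rightarrow> 'n \<Rightarrow> bool) \<Rightarrow> bool" where
  "simple_graph adj \<longleftrightarrow> (\<forall>x y. adj x y \<longrightarrow> adj y x) \<and> (\<forall>x. \<not> adj x x)"

definition degree :: "('n::finite \<Rightarrow> 'n \<Rightarrow> bool) \<Rightarrow> 'n \<Rightarrow> nat" where
  "degree adj x = card {y. adj x y}"

definition max_degree :: "('n::finite \<Rightarrow> 'n \<Rightarrow> bool) \<Rightarrow> nat" where
  "max_degree adj = Max (range (degree adj))"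

definition walk :: "('n \<Rightarrow> 'n \<Rightarrow> bool) \<Rightarrow> 'n \<Rightarrow> 'n \<Rightarrow> nat \<Rightarrow> bool" where
  "walk adj x y n \<longleftrightarrow> (\<exists>p. length p = Suc n \<and> p ! 0 = x \<and> p ! n = y \<and>
      (\<forall>i<n. adj (p ! i) (p ! Suc i)))"

text \<open>Graph distance (infinite if x and y lie in different components).\<close>
definition gdist :: "('n \<Rightarrow> 'n \<Rightarrow> bool) \<Rightarrow> 'n \<Rightarrow> 'n \<Rightarrow> enat" where
  "gdist adj x y = (INF n \<in> {n. walk adj x y n}. enat n)"

definition boundary_diameter :: "('n \<Rightarrow> 'n \<Rightarrow> bool) \<Rightarrow> 'n set \<Rightarrow> enat" where
  "boundary_diameter adj B = (SUP p \<in> B \<times> B. gdist adj (fst p) (snd p))"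

text \<open>Dirichlet energy: sum over undirected edges {x,y}; each edge appears twice
  as an ordered pair, hence the factor 1/2.\<close>
definition energy :: "('n::finite \<Rightarrow> 'n \<Rightarrow> bool) \<Rightarrow> real ^ 'n \<Rightarrow> real" where
  "energy adj f = (\<Sum>(x,y) \<in> {(x,y). adj x y}. (f $ x - f $ y)\<^sup>2) / 2"

definition rayleigh :: "('n::finite \<Rightarrow> 'n \<Rightarrow> bool) \<Rightarrow> 'n set \<Rightarrow> real ^ 'n \<Rightarrow> ereal" where
  "rayleigh adj B f =
     (if (\<forall>x\<in>B. f $ x = 0) then \<infinity>
      else ereal (energy adj f / (\<Sum>x\<in>B. (f $ x)\<^sup>2)))"

definition sigma2 :: "('n::finite \<Rightarrow> 'n \<Rightarrow> bool) \<Rightarrow> 'n set \<Rightarrow> ereal" where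
  "sigma2 adj B = (INF W \<in> {W :: (real ^ 'n) set. subspace W \<and> dim W = 2}.
                      (SUP f \<in> W - {0}. rayleigh adj B f))"

definition steklov_bound :: "real \<Rightarrow> nat \<Rightarrow> real" where
  "steklov_bound q t = (q + 1) * (q ^ (t + 1) - q ^ t + 1) / q ^ (t + 1)"

end

theory Submission
  imports Defs
begin

text \<open>Choose boundary vertices x, y with d(x, y) \<ge> 2t + 2 and around each put the test
  function v \<mapsto> q^(-d(x, v)) on the ball of radius t, zero outside. The two balls are disjoint
  and no edge joins them, so on the plane spanned by the two functions both the energy and the
  boundary mass are diagonal, and \<open>\<sigma>\<^sub>2\<close> is bounded by the larger of the two Rayleigh quotients;
  as each function is 1 at its centre, that is at most its energy. Only edges from a
  breadth-first level k to level k + 1 contribute to the energy, each (q^(-k) - q^(-k-1))^2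
  (or q^(-2t) for k = t), and there are at most \<Delta>(\<Delta> - 1)^k = (q + 1) q^k of them. The resulting
  geometric sum is exactly (q + 1)(1 - 1/q + q^(-t-1)), the stated bound.\<close>

lemma walk_0: "walk adj x y 0 \<longleftrightarrow> x = y"
  unfolding walk_def by (auto intro!: exI[of _ "[y]"])

lemma walk_Suc: "walk adj x y (Suc n) \<longleftrightarrow> (\<exists>u. walk adj x u n \<and> adj u y)"
proof
  assume "walk adj x y (Suc n)"
  then obtain p where p: "length p = Suc (Suc n)" "p ! 0 = x" "p ! Suc n = y"
    "\<forall>i<Suc n. adj (p ! i) (p ! Suc i)"
    unfolding walk_def by blast
  have "walk adj x (p ! n) n"
    unfolding walk_def using p by (intro exI[of _ "take (Suc n) p"]) auto
  with p show "\<exists>u. walk adj x u n \<and> adj u y" by auto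
next
  assume "\<exists>u. walk adj x u n \<and> adj u y"
  then obtain p where p: "length p = Suc n" "p ! 0 = x" "\<forall>i<n. adj (p ! i) (p ! Suc i)"
    "adj (p ! n) y"
    unfolding walk_def by blast
  have "adj ((p @ [y]) ! i) ((p @ [y]) ! Suc i)" if "i < Suc n" for i
    using p that by (cases "i = n") (auto simp: nth_append)
  then show "walk adj x y (Suc n)"
    unfolding walk_def using p by (intro exI[of _ "p @ [y]"]) (auto simp: nth_append)
qed

lemma walk_trans: "walk adj x u m \<Longrightarrow> walk adj u y n \<Longrightarrow> walk adj x y (m + n)"
  by (induction n arbitrary: y) (auto simp: walk_0 walk_Suc)

lemma gdist_le_walk: "walk adj x y n \<Longrightarrow> gdist adj x y \<le> enat n"
  unfolding gdist_def by (rule INF_lower) simp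

lemma boundary_diameter_attained:
  fixes adj :: "'n::finite \<Rightarrow> 'n \<Rightarrow> bool"
  assumes "B \<noteq> {}"
  obtains x y where "x \<in> B" "y \<in> B" "boundary_diameter adj B = gdist adj x y"
proof -
  let ?d = "\<lambda>p. gdist adj (fst p) (snd p)"
  have "finite (?d ` (B \<times> B))" "?d ` (B \<times> B) \<noteq> {}"
    using assms by auto
  then have "boundary_diameter adj B \<in> ?d ` (B \<times> B)"
    unfolding boundary_diameter_def by (metis Max_Sup Max_in)
  then show thesis using that by auto
qed

definition reachable :: "('n \<Rightarrow> 'n \<Rightarrow> bool) \<Rightarrow> 'n \<Rightarrow> 'n \<Rightarrow> bool" where
  "reachable adj x v \<longleftrightarrow> (\<exists>n. walk adj x v n)"

definition hops :: "('n \<Rightarrow> 'n \<Rightarrow> bool) \<Rightarrow> 'n \<Rightarrow> 'n \<Rightarrow> nat" where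
  "hops adj x v = (LEAST n. walk adj x v n)" \<comment> \<open>junk value \<open>0\<close> if \<open>v\<close> is not reachable\<close>

lemma reachableI: "walk adj x v n \<Longrightarrow> reachable adj x v"
  unfolding reachable_def by blast

lemma walk_hops: "reachable adj x v \<Longrightarrow> walk adj x v (hops adj x v)"
  unfolding reachable_def hops_def by (metis LeastI)

lemma hops_le_walk: "walk adj x v n \<Longrightarrow> hops adj x v \<le> n"
  unfolding hops_def by (rule Least_le)

lemma reachable_self: "reachable adj x x"
  and hops_self: "hops adj x x = 0"
  using reachableI[of adj x x 0] hops_le_walk[of adj x x 0] by (simp_all add: walk_0)

lemma hops_eq_0_iff: "reachable adj x u \<Longrightarrow> hops adj x u = 0 \<longleftrightarrow> u = x"
  using walk_hops[of adj x u] by (auto simp: walk_0 hops_self)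

lemma hops_adj_le:
  assumes "adj u v" "reachable adj x u"
  shows "reachable adj x v" "hops adj x v \<le> Suc (hops adj x u)"
proof -
  have "walk adj x v (Suc (hops adj x u))"
    using assms walk_hops[of adj x u] by (auto simp: walk_Suc)
  then show "reachable adj x v" "hops adj x v \<le> Suc (hops adj x u)"
    by (auto intro: reachableI hops_le_walk)
qed

lemma hops_Suc_predecessor:
  assumes "reachable adj x v" "hops adj x v = Suc k"
  obtains p where "adj p v" "reachable adj x p" "hops adj x p = k"
proof -
  obtain p where p: "walk adj x p k" "adj p v"
    using assms walk_hops[of adj x v] by (auto simp: walk_Suc)
  then have "reachable adj x p" "hops adj x p \<le> k"
    by (auto intro: reachableI hops_le_walk)
  moreover have "Suc k \<le> Suc (hops adj x p)"
    using hops_adj_le(2)[OF p(2) \<open>reachable adj x p\<close>] assms(2) by simp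
  ultimately show thesis using that p(2) by simp
qed

lemma degree_le_max_degree: "degree adj u \<le> max_degree adj"
  unfolding max_degree_def by (rule Max_ge) auto

definition ascending_edges :: "('n \<Rightarrow> 'n \<Rightarrow> bool) \<Rightarrow> 'n \<Rightarrow> ('n \<times> 'n) set" where
  "ascending_edges adj x =
     {(u, v). adj u v \<and> reachable adj x u \<and> hops adj x v = Suc (hops adj x u)}"

definition level_edges :: "('n \<Rightarrow> 'n \<Rightarrow> bool) \<Rightarrow> 'n \<Rightarrow> nat \<Rightarrow> ('n \<times> 'n) set" where
  "level_edges adj x k = {e \<in> ascending_edges adj x. hops adj x (fst e) = k}"

definition radial :: "('n::finite \<Rightarrow> 'n \<Rightarrow> bool) \<Rightarrow> 'n \<Rightarrow> (nat \<Rightarrow> real) \<Rightarrow> real ^ 'n" where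
  "radial adj x g = (\<chi> v. if reachable adj x v then g (hops adj x v) else 0)"

definition ascent :: "('n \<Rightarrow> 'n \<Rightarrow> bool) \<Rightarrow> 'n \<Rightarrow> (nat \<Rightarrow> real) \<Rightarrow> 'n \<times> 'n \<Rightarrow> real" where
  "ascent adj x g e =
     (if e \<in> ascending_edges adj x
      then (g (hops adj x (fst e)) - g (Suc (hops adj x (fst e))))\<^sup>2 else 0)"

definition decay_profile :: "real \<Rightarrow> nat \<Rightarrow> nat \<Rightarrow> real" where
  "decay_profile q t k = (if k \<le> t then (1 / q) ^ k else 0)"

lemma steklov_bound_alt: "q \<noteq> 0 \<Longrightarrow> steklov_bound q t = (q + 1) * (1 - 1 / q + (1 / q) ^ (t + 1))"
  unfolding steklov_bound_def by (simp add: field_simps power_one_over)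

lemma steklov_bound_eq: "q \<noteq> 0 \<Longrightarrow> steklov_bound q t = q - (q ^ t - q - 1) / q ^ (t + 1)"
  unfolding steklov_bound_def by (simp add: field_simps)

lemma steklov_bound_antimono: "1 \<le> q \<Longrightarrow> s \<le> s' \<Longrightarrow> steklov_bound q s' \<le> steklov_bound q s"
  using power_decreasing[of "s + 1" "s' + 1" "1 / q"] by (simp add: steklov_bound_alt)

lemma steklov_bound_nonneg: "1 \<le> q \<Longrightarrow> 0 \<le> steklov_bound q t"
  using power_le_one[of "1 / q" t] by (simp add: steklov_bound_alt)

lemma decay_profile_energy_sum:
  fixes q :: real
  assumes "q \<noteq> 0"
  shows "(\<Sum>k<Suc t. (decay_profile q t k - decay_profile q t (Suc k))\<^sup>2 * ((q + 1) * q ^ k))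
    = steklov_bound q t"
proof -
  define r where "r = 1 / q"
  have qr: "q ^ k * r ^ k = 1" for k
    using assms by (simp add: r_def power_one_over)
  have inner: "(decay_profile q t k - decay_profile q t (Suc k))\<^sup>2 * ((q + 1) * q ^ k)
      = (q + 1) * (1 - r)\<^sup>2 * r ^ k" if "k < t" for k
  proof -
    have "decay_profile q t k = r ^ k" "decay_profile q t (Suc k) = r ^ k * r"
      using that by (simp_all add: decay_profile_def r_def)
    moreover have "(r ^ k - r ^ k * r)\<^sup>2 * ((q + 1) * q ^ k)
        = (q + 1) * (1 - r)\<^sup>2 * r ^ k * (q ^ k * r ^ k)"
      by (simp add: power2_eq_square algebra_simps)
    ultimately show ?thesis by (simp add: qr)
  qed
  have last: "(decay_profile q t t - decay_profile q t (Suc t))\<^sup>2 * ((q + 1) * q ^ t) = (q + 1) * r ^ t"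
    using qr[of t] by (simp add: decay_profile_def r_def[symmetric] power2_eq_square algebra_simps)
  have "(\<Sum>k<Suc t. (decay_profile q t k - decay_profile q t (Suc k))\<^sup>2 * ((q + 1) * q ^ k))
      = (\<Sum>k<t. (q + 1) * (1 - r)\<^sup>2 * r ^ k) + (q + 1) * r ^ t"
    by (simp add: last inner)
  also have "\<dots> = (q + 1) * (1 - r) * ((1 - r) * (\<Sum>k<t. r ^ k)) + (q + 1) * r ^ t"
    by (simp add: sum_distrib_left power2_eq_square mult.assoc)
  also have "\<dots> = (q + 1) * (1 - r + r ^ (t + 1))"
    unfolding one_diff_power_eq[symmetric] by (simp add: algebra_simps)
  finally show ?thesis
    using assms by (simp add: steklov_bound_alt r_def)
qed

lemma energy_add_orthogonal:
  fixes F G :: "real ^ 'n::finite"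
  assumes orthogonal: "\<And>u v. adj u v \<Longrightarrow> (F $ u - F $ v) * (G $ u - G $ v) = 0"
  shows "energy adj (a *\<^sub>R F + b *\<^sub>R G) = a\<^sup>2 * energy adj F + b\<^sup>2 * energy adj G"
proof -
  have "((a *\<^sub>R F + b *\<^sub>R G) $ u - (a *\<^sub>R F + b *\<^sub>R G) $ v)\<^sup>2
      = a\<^sup>2 * (F $ u - F $ v)\<^sup>2 + b\<^sup>2 * (G $ u - G $ v)\<^sup>2" if "adj u v" for u v
  proof -
    have "((a *\<^sub>R F + b *\<^sub>R G) $ u - (a *\<^sub>R F + b *\<^sub>R G) $ v)\<^sup>2
        = a\<^sup>2 * (F $ u - F $ v)\<^sup>2 + b\<^sup>2 * (G $ u - G $ v)\<^sup>2
          + 2 * a * b * ((F $ u - F $ v) * (G $ u - G $ v))"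
      by (simp add: power2_eq_square algebra_simps)
    then show ?thesis by (simp only: orthogonal[OF that])
  qed
  then have "(\<Sum>(u, v)\<in>{(u, v). adj u v}. ((a *\<^sub>R F + b *\<^sub>R G) $ u - (a *\<^sub>R F + b *\<^sub>R G) $ v)\<^sup>2)
      = (\<Sum>(u, v)\<in>{(u, v). adj u v}. a\<^sup>2 * (F $ u - F $ v)\<^sup>2 + b\<^sup>2 * (G $ u - G $ v)\<^sup>2)"
    by (intro sum.cong) auto
  then show ?thesis
    unfolding energy_def
    by (simp add: case_prod_beta sum.distrib sum_distrib_left add_divide_distrib)
qed

lemma sum_sq_add_disjoint:
  fixes F G :: "real ^ 'n::finite"
  assumes "\<And>v. F $ v * G $ v = 0"
  shows "(\<Sum>v\<in>B. ((a *\<^sub>R F + b *\<^sub>R G) $ v)\<^sup>2) = a\<^sup>2 * (\<Sum>v\<in>B. (F $ v)\<^sup>2) + b\<^sup>2 * (\<Sum>v\<in>B. (G $ v)\<^sup>2)"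
proof -
  have "((a *\<^sub>R F + b *\<^sub>R G) $ v)\<^sup>2 = a\<^sup>2 * (F $ v)\<^sup>2 + b\<^sup>2 * (G $ v)\<^sup>2 + 2 * a * b * (F $ v * G $ v)"
    for v
    by (simp add: power2_eq_square algebra_simps)
  then show ?thesis
    using assms by (simp add: sum.distrib sum_distrib_left)
qed

lemma dim_span_disjoint_pair:
  fixes F G :: "real ^ 'n::finite"
  assumes "F $ x \<noteq> 0" "G $ y \<noteq> 0" "\<And>v. F $ v * G $ v = 0"
  shows "dim (span {F, G}) = 2"
proof -
  have "G $ x = 0" using assms(1) assms(3)[of x] by simp
  then have "F \<notin> span {G}" "F \<noteq> G"
    using assms(1) by (auto simp: span_singleton)
  moreover have "independent {G}"
    using assms(2) independent_insertI[of G "{}"] by auto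
  ultimately have "independent {F, G}"
    by (simp add: independent_insertI)
  with \<open>F \<noteq> G\<close> show ?thesis
    using dim_span_eq_card_independent by fastforce
qed

text \<open>Energy and boundary mass are both additive on combinations of \<open>F\<close> and \<open>G\<close>, so every
  nonzero function in their span has Rayleigh quotient at most \<open>C\<close>.\<close>

lemma sigma2_le_of_disjoint_pair:
  fixes F G :: "real ^ 'n::finite"
  assumes "x \<in> B" "F $ x \<noteq> 0" "y \<in> B" "G $ y \<noteq> 0"
    and disjoint: "\<And>v. F $ v * G $ v = 0"
    and orthogonal: "\<And>u v. adj u v \<Longrightarrow> (F $ u - F $ v) * (G $ u - G $ v) = 0"
    and EF: "energy adj F \<le> C * (\<Sum>v\<in>B. (F $ v)\<^sup>2)"
    and EG: "energy adj G \<le> C * (\<Sum>v\<in>B. (G $ v)\<^sup>2)"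
  shows "sigma2 adj B \<le> ereal C"
proof -
  let ?S = "\<lambda>f :: real ^ 'n. \<Sum>v\<in>B. (f $ v)\<^sup>2"
  have sum_pos: "0 < ?S f" if "z \<in> B" "f $ z \<noteq> 0" for f z
  proof -
    have "(f $ z)\<^sup>2 \<le> ?S f"
      using that(1) by (intro member_le_sum) auto
    moreover have "0 < (f $ z)\<^sup>2"
      using that(2) by simp
    ultimately show ?thesis by linarith
  qed
  have SF: "0 < ?S F" and SG: "0 < ?S G"
    using sum_pos assms(1-4) by auto
  have "rayleigh adj B h \<le> ereal C" if "h \<in> span {F, G} - {0}" for h
  proof -
    from that obtain a where "h - a *\<^sub>R F \<in> span {G}"
      by (auto simp: span_insert)
    then obtain b where "h - a *\<^sub>R F = b *\<^sub>R G"
      by (auto simp: span_singleton)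
    then have h: "h = a *\<^sub>R F + b *\<^sub>R G"
      by (simp add: algebra_simps)
    with that have "a \<noteq> 0 \<or> b \<noteq> 0" by auto
    then have pos: "0 < ?S h"
      unfolding h sum_sq_add_disjoint[OF disjoint] using SF SG
      by (auto intro: add_pos_nonneg add_nonneg_pos)
    have "energy adj h = a\<^sup>2 * energy adj F + b\<^sup>2 * energy adj G"
      unfolding h by (rule energy_add_orthogonal[OF orthogonal])
    also have "\<dots> \<le> a\<^sup>2 * (C * ?S F) + b\<^sup>2 * (C * ?S G)"
      using EF EG by (intro add_mono mult_left_mono) auto
    also have "\<dots> = C * ?S h"
      unfolding h sum_sq_add_disjoint[OF disjoint] by (simp add: algebra_simps)
    finally have "energy adj h / ?S h \<le> C"
      using pos by (simp add: pos_divide_le_eq)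
    moreover have "\<not> (\<forall>v\<in>B. h $ v = 0)"
    proof
      assume "\<forall>v\<in>B. h $ v = 0"
      then have "?S h = 0" by simp
      with pos show False by simp
    qed
    ultimately show ?thesis by (simp add: rayleigh_def)
  qed
  then have "(SUP h\<in>span {F, G} - {0}. rayleigh adj B h) \<le> ereal C"
    by (rule SUP_least)
  moreover have "sigma2 adj B \<le> (SUP h\<in>span {F, G} - {0}. rayleigh adj B h)"
    unfolding sigma2_def
    using dim_span_disjoint_pair[OF assms(2,4) disjoint]
    by (intro INF_lower) simp
  ultimately show ?thesis by simp
qed

locale sgraph =
  fixes adj :: "'n::finite \<Rightarrow> 'n \<Rightarrow> bool"
  assumes simple: "simple_graph adj"
begin

lemma adj_sym: "adj u v \<Longrightarrow> adj v u"
  using simple unfolding simple_graph_def by blast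

lemma walk_sym: "walk adj x y n \<Longrightarrow> walk adj y x n"
proof (induction n arbitrary: y)
  case (Suc n)
  then obtain u where "walk adj x u n" "adj u y" by (auto simp: walk_Suc)
  with Suc.IH have "walk adj y u 1" "walk adj u x n"
    by (auto simp: walk_Suc walk_0 adj_sym)
  then show ?case using walk_trans by fastforce
qed (simp add: walk_0)

lemma reachable_adj_iff: "adj u v \<Longrightarrow> reachable adj x u \<longleftrightarrow> reachable adj x v"
  using hops_adj_le(1) adj_sym by metis

lemma hops_adj_cases:
  assumes "adj u v" "reachable adj x u"
  obtains "hops adj x v = hops adj x u"
    | "hops adj x v = Suc (hops adj x u)"
    | "hops adj x u = Suc (hops adj x v)"
  using hops_adj_le(2)[OF assms] hops_adj_le[OF adj_sym[OF assms(1)] hops_adj_le(1)[OF assms]]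
  by linarith

lemma card_level_edges_0: "card (level_edges adj x 0) \<le> max_degree adj"
proof -
  have "level_edges adj x 0 \<subseteq> Pair x ` {v. adj x v}"
    by (auto simp: level_edges_def ascending_edges_def hops_eq_0_iff)
  then have "card (level_edges adj x 0) \<le> card (Pair x ` {v. adj x v})"
    by (intro card_mono) auto
  also have "\<dots> \<le> card {v. adj x v}"
    by (rule card_image_le) simp
  finally have "card (level_edges adj x 0) \<le> card {v. adj x v}" .
  then show ?thesis
    using degree_le_max_degree[of adj x] by (simp add: degree_def)
qed

text \<open>Every vertex at distance \<open>k + 1\<close> is entered by an edge from level \<open>k\<close>, and that
  edge is not among its own edges leading to level \<open>k + 2\<close>.\<close>

lemma card_level_edges_Suc:
  "card (level_edges adj x (Suc k)) \<le> (max_degree adj - 1) * card (level_edges adj x k)"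
proof -
  define L where "L = {u. reachable adj x u \<and> hops adj x u = Suc k}"
  have "\<exists>p. adj p u \<and> reachable adj x p \<and> hops adj x p = k" if "u \<in> L" for u
  proof -
    from that have "reachable adj x u" "hops adj x u = Suc k" by (simp_all add: L_def)
    then obtain p where "adj p u" "reachable adj x p" "hops adj x p = k"
      by (rule hops_Suc_predecessor)
    then show ?thesis by blast
  qed
  then obtain P where P: "\<And>u. u \<in> L \<Longrightarrow> adj (P u) u \<and> reachable adj x (P u) \<and> hops adj x (P u) = k"
    by (metis bchoice)
  have "level_edges adj x (Suc k) \<subseteq> Sigma L (\<lambda>u. {v. adj u v} - {P u})"
  proof
    fix e assume "e \<in> level_edges adj x (Suc k)"
    then obtain u v where e: "e = (u, v)" "adj u v" "reachable adj x u"
      "hops adj x u = Suc k" "hops adj x v = Suc (Suc k)"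
      unfolding level_edges_def ascending_edges_def by auto
    then have "u \<in> L" by (simp add: L_def)
    with P e(5) have "v \<noteq> P u" by auto
    with e \<open>u \<in> L\<close> show "e \<in> Sigma L (\<lambda>u. {v. adj u v} - {P u})" by simp
  qed
  then have "card (level_edges adj x (Suc k)) \<le> card (Sigma L (\<lambda>u. {v. adj u v} - {P u}))"
    by (intro card_mono) auto
  also have "\<dots> = (\<Sum>u\<in>L. card ({v. adj u v} - {P u}))"
    by (rule card_SigmaI) auto
  also have "\<dots> \<le> (\<Sum>u\<in>L. max_degree adj - 1)"
  proof (rule sum_mono)
    fix u assume "u \<in> L"
    then have "adj u (P u)" using P adj_sym by blast
    then have "card ({v. adj u v} - {P u}) = degree adj u - 1"
      by (simp add: card_Diff_singleton degree_def)
    then show "card ({v. adj u v} - {P u}) \<le> max_degree adj - 1"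
      using degree_le_max_degree[of adj u] by linarith
  qed
  also have "\<dots> \<le> (max_degree adj - 1) * card (level_edges adj x k)"
  proof -
    have "(P u, u) \<in> level_edges adj x k" if "u \<in> L" for u
      using P[OF that] that by (simp add: level_edges_def ascending_edges_def L_def)
    then have "L \<subseteq> snd ` level_edges adj x k"
      by (metis image_eqI snd_conv subsetI)
    then have "card L \<le> card (snd ` level_edges adj x k)"
      by (intro card_mono) auto
    also have "\<dots> \<le> card (level_edges adj x k)"
      by (rule card_image_le) simp
    finally have "card L \<le> card (level_edges adj x k)" .
    then show ?thesis by simp
  qed
  finally show ?thesis .
qed

lemma card_level_edges: "card (level_edges adj x k) \<le> max_degree adj * (max_degree adj - 1) ^ k"
proof (induction k)
  case (Suc k)
  have "card (level_edges adj x (Suc k)) \<le> (max_degree adj - 1) * card (level_edges adj x k)"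
    by (rule card_level_edges_Suc)
  also have "\<dots> \<le> (max_degree adj - 1) * (max_degree adj * (max_degree adj - 1) ^ k)"
    using Suc.IH by simp
  finally show ?case by (simp add: algebra_simps)
qed (simp add: card_level_edges_0)

lemma radial_diff_sq:
  assumes "adj u v"
  shows "(radial adj x g $ u - radial adj x g $ v)\<^sup>2 = ascent adj x g (u, v) + ascent adj x g (v, u)"
proof (cases "reachable adj x u")
  case False
  then show ?thesis
    using reachable_adj_iff[OF assms]
    by (simp add: radial_def ascent_def ascending_edges_def)
next
  case True
  then have "reachable adj x v" using reachable_adj_iff[OF assms] by simp
  with True assms adj_sym[OF assms] show ?thesis
    by (cases rule: hops_adj_cases[OF assms True])
      (simp_all add: radial_def ascent_def ascending_edges_def power2_commute)
qed

lemma energy_radial: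
  fixes g :: "nat \<Rightarrow> real"
  assumes const: "\<And>k. n \<le> k \<Longrightarrow> g (Suc k) = g k"
  shows "energy adj (radial adj x g) = (\<Sum>k<n. (g k - g (Suc k))\<^sup>2 * card (level_edges adj x k))"
proof -
  define S where "S = {(u, v). adj u v}"
  define A where "A = ascending_edges adj x"
  define h :: "'n \<times> 'n \<Rightarrow> nat" where "h e = hops adj x (fst e)" for e
  define w where "w k = (g k - g (Suc k))\<^sup>2" for k
  have swap: "(\<Sum>e\<in>S. ascent adj x g (prod.swap e)) = (\<Sum>e\<in>S. ascent adj x g e)"
    by (rule sum.reindex_bij_witness[of _ prod.swap prod.swap]) (auto simp: S_def adj_sym)
  have "energy adj (radial adj x g) = (\<Sum>e\<in>S. ascent adj x g e + ascent adj x g (prod.swap e)) / 2"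
    unfolding energy_def S_def
    by (intro arg_cong[where f = "\<lambda>s. s / 2"] sum.cong) (auto simp: radial_diff_sq)
  also have "\<dots> = (\<Sum>e\<in>S. ascent adj x g e)"
    using swap by (simp add: sum.distrib)
  also have "(\<Sum>e\<in>S. ascent adj x g e) = (\<Sum>e\<in>A. w (h e))"
  proof -
    have "A \<subseteq> S" by (auto simp: A_def S_def ascending_edges_def)
    then show ?thesis
      unfolding ascent_def A_def[symmetric] h_def w_def
      by (simp add: sum.If_cases Int_absorb1)
  qed
  also have "\<dots> = (\<Sum>k\<in>{..<n} \<union> h ` A. \<Sum>e\<in>{e \<in> A. h e = k}. w (h e))"
    by (rule sum.group[symmetric]) auto
  also have "\<dots> = (\<Sum>k\<in>{..<n} \<union> h ` A. w k * card (level_edges adj x k))"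
    by (intro sum.cong) (auto simp: level_edges_def A_def h_def)
  also have "\<dots> = (\<Sum>k<n. w k * card (level_edges adj x k))"
    using const by (intro sum.mono_neutral_right) (auto simp: w_def)
  finally show ?thesis by (simp add: w_def)
qed

lemma energy_decay_le:
  assumes "2 \<le> max_degree adj" and q: "q = real (max_degree adj) - 1"
  shows "energy adj (radial adj x (decay_profile q t)) \<le> steklov_bound q t"
proof -
  let ?w = "\<lambda>k. (decay_profile q t k - decay_profile q t (Suc k))\<^sup>2"
  have "energy adj (radial adj x (decay_profile q t))
      = (\<Sum>k<Suc t. ?w k * card (level_edges adj x k))"
    by (rule energy_radial) (simp add: decay_profile_def)
  also have "\<dots> \<le> (\<Sum>k<Suc t. ?w k * ((q + 1) * q ^ k))"
  proof (intro sum_mono mult_left_mono)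
    fix k
    have "real (card (level_edges adj x k)) \<le> real (max_degree adj * (max_degree adj - 1) ^ k)"
      using card_level_edges by (simp only: of_nat_le_iff)
    then show "real (card (level_edges adj x k)) \<le> (q + 1) * q ^ k"
      using assms by (simp add: of_nat_diff)
  qed simp
  also have "\<dots> = steklov_bound q t"
    using assms by (intro decay_profile_energy_sum) simp
  finally show ?thesis .
qed

lemma radial_decay_nonzero_walk:
  assumes "radial adj x (decay_profile q t) $ v \<noteq> 0"
  obtains m where "m \<le> t" "walk adj x v m"
proof -
  have "(if reachable adj x v then decay_profile q t (hops adj x v) else 0) \<noteq> 0"
    using assms by (simp add: radial_def)
  then have "reachable adj x v" "hops adj x v \<le> t"
    by (simp_all add: decay_profile_def split: if_splits)
  then show thesis
    by (metis that walk_hops)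
qed

lemma radial_decay_supports_apart:
  assumes far: "enat (2 * t + 2) \<le> gdist adj x y"
    and "radial adj x (decay_profile q t) $ u \<noteq> 0" "radial adj y (decay_profile q t) $ v \<noteq> 0"
    and "walk adj u v n"
  shows "2 \<le> n"
proof -
  obtain a where "a \<le> t" "walk adj x u a"
    by (rule radial_decay_nonzero_walk[OF assms(2)])
  obtain b where "b \<le> t" "walk adj y v b"
    by (rule radial_decay_nonzero_walk[OF assms(3)])
  have "walk adj v y b"
    using walk_sym \<open>walk adj y v b\<close> .
  have "walk adj x y (a + n + b)"
    by (rule walk_trans[OF walk_trans[OF \<open>walk adj x u a\<close> assms(4)] \<open>walk adj v y b\<close>])
  then have "gdist adj x y \<le> enat (a + n + b)"
    by (rule gdist_le_walk)
  with far have "enat (2 * t + 2) \<le> enat (a + n + b)"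
    by (rule order_trans)
  with \<open>a \<le> t\<close> \<open>b \<le> t\<close> show ?thesis by simp
qed

lemma radial_decay_separated:
  fixes q :: real
  assumes far: "enat (2 * t + 2) \<le> gdist adj x y"
  defines "F \<equiv> radial adj x (decay_profile q t)" and "G \<equiv> radial adj y (decay_profile q t)"
  shows "F $ v * G $ v = 0"
    and "adj u v \<Longrightarrow> (F $ u - F $ v) * (G $ u - G $ v) = 0"
proof -
  have apart: "2 \<le> n" if "F $ u \<noteq> 0" "G $ v \<noteq> 0" "walk adj u v n" for u v n
    using radial_decay_supports_apart[OF far] that unfolding F_def G_def by blast
  show disjoint: "F $ v * G $ v = 0" for v
    using apart[of v v 0] by (auto simp: walk_0)
  have no_edge: "F $ u * G $ v = 0" if "adj u v" for u v
    using apart[of u v 1] that by (auto simp: walk_Suc walk_0)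
  show "(F $ u - F $ v) * (G $ u - G $ v) = 0" if "adj u v"
  proof -
    have "(F $ u - F $ v) * (G $ u - G $ v) = F $ u * G $ u - F $ u * G $ v - F $ v * G $ u + F $ v * G $ v"
      by (simp add: algebra_simps)
    then show ?thesis
      by (simp only: disjoint no_edge[OF that] no_edge[OF adj_sym[OF that]])
  qed
qed

lemma sigma2_le_steklov_bound:
  assumes "2 \<le> max_degree adj" "x \<in> B" "y \<in> B" and far: "enat (2 * t + 2) \<le> gdist adj x y"
  shows "sigma2 adj B \<le> ereal (steklov_bound (real (max_degree adj) - 1) t)"
proof -
  define q where "q = real (max_degree adj) - 1"
  define F where "F = radial adj x (decay_profile q t)"
  define G where "G = radial adj y (decay_profile q t)"
  have "F $ x = 1" "G $ y = 1"
    by (simp_all add: F_def G_def radial_def decay_profile_def reachable_self hops_self)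
  have disjoint: "F $ v * G $ v = 0" for v
    unfolding F_def G_def by (rule radial_decay_separated(1)[OF far])
  have orthogonal: "(F $ u - F $ v) * (G $ u - G $ v) = 0" if "adj u v" for u v
    unfolding F_def G_def by (rule radial_decay_separated(2)[OF far that])
  have bound: "energy adj f \<le> steklov_bound q t * (\<Sum>v\<in>B. (f $ v)\<^sup>2)"
    if "energy adj f \<le> steklov_bound q t" "z \<in> B" "f $ z = 1" for f z
  proof -
    have "1 \<le> (\<Sum>v\<in>B. (f $ v)\<^sup>2)"
      using member_le_sum[of z B "\<lambda>v. (f $ v)\<^sup>2"] that(2,3) by simp
    moreover have "0 \<le> steklov_bound q t"
      using assms(1) by (intro steklov_bound_nonneg) (simp add: q_def)
    ultimately have "steklov_bound q t * 1 \<le> steklov_bound q t * (\<Sum>v\<in>B. (f $ v)\<^sup>2)"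
      by (rule mult_left_mono)
    with that(1) show ?thesis by simp
  qed
  show ?thesis
    unfolding q_def[symmetric]
  proof (rule sigma2_le_of_disjoint_pair[OF assms(2) _ assms(3) _ disjoint orthogonal])
    show "energy adj F \<le> steklov_bound q t * (\<Sum>v\<in>B. (F $ v)\<^sup>2)"
      using bound energy_decay_le[OF assms(1) q_def] \<open>F $ x = 1\<close> assms(2) unfolding F_def by blast
    show "energy adj G \<le> steklov_bound q t * (\<Sum>v\<in>B. (G $ v)\<^sup>2)"
      using bound energy_decay_le[OF assms(1) q_def] \<open>G $ y = 1\<close> assms(3) unfolding G_def by blast
  qed (simp_all add: \<open>F $ x = 1\<close> \<open>G $ y = 1\<close>)
qed

end

theorem mainTheorem9:
  fixes adj :: "'n::finite \<Rightarrow> 'n \<Rightarrow> bool" and B :: "'n set" and t :: nat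
  assumes "simple_graph adj"
    and "card B \<ge> 2"
    and "max_degree adj \<ge> 3"
    and "t \<ge> 1"
    and "boundary_diameter adj B \<ge> enat (2 * t + 2)"
  shows "sigma2 adj B \<le> ereal (steklov_bound (real (max_degree adj) - 1) t)
    \<and> steklov_bound (real (max_degree adj) - 1) t
        = (real (max_degree adj) - 1)
          - ((real (max_degree adj) - 1) ^ t - (real (max_degree adj) - 1) - 1)
            / (real (max_degree adj) - 1) ^ (t + 1)
    \<and> (\<forall>s s'. 1 \<le> s \<longrightarrow> s \<le> s' \<longrightarrow>
          steklov_bound (real (max_degree adj) - 1) s'
            \<le> steklov_bound (real (max_degree adj) - 1) s)"
proof -
  interpret sgraph adj by unfold_locales (rule assms(1))
  have "B \<noteq> {}" using assms(2) by auto
  then obtain x y where "x \<in> B" "y \<in> B" "boundary_diameter adj B = gdist adj x y"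
    by (rule boundary_diameter_attained)
  with assms(3,5) have "sigma2 adj B \<le> ereal (steklov_bound (real (max_degree adj) - 1) t)"
    by (intro sigma2_le_steklov_bound) auto
  moreover have q: "1 \<le> real (max_degree adj) - 1"
    using assms(3) by simp
  moreover from q have "steklov_bound (real (max_degree adj) - 1) t
      = (real (max_degree adj) - 1)
        - ((real (max_degree adj) - 1) ^ t - (real (max_degree adj) - 1) - 1)
          / (real (max_degree adj) - 1) ^ (t + 1)"
    by (intro steklov_bound_eq) simp
  ultimately show ?thesis
    using steklov_bound_antimono[OF q] by blast
qed

end
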